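(* Fix an integer $k\ge 3$. There exist a constant $c>0$ and $n_0$ (depending only on $k$) such that for every even $n\ge n_0$ and all $\mathbf{x},\mathbf{x}'\in\{0,1\}^{n/2}$ with $D:=|\mathbf{x}|-|\mathbf{x}'|\ge 0$, $$C_k(G^{\mathbf{x}})-C_k(G^{\mathbf{x}'})\ \ge\ c\,n^{k-2}D,$$ i.e. $C_k(G^{\mathbf{x}})-C_k(G^{\mathbf{x}'})=\Omega(n^{k-2}\cdot D)$.
   Context: For even $n$ and $\mathbf{x}=(x_1,\dots,x_{n/2})\in\{0,1\}^{n/2}$, the graph $G^{\mathbf{x}}=(V,E^{\mathbf{x}})$ has $V=\{v_1,\dots,v_n\}$; every pair $\{u,v\}$ of distinct nodes that is not of the form $\{v_{2i-1},v_{2i}\}$ is an edge, and for $1\le i\le n/2$ the pair $\{v_{2i-1},v_{2i}\}$ is an edge iff $x_i=1$. $|\mathbf{x}|$ denotes the number of ones in $\mathbf{x}$. $C_k(G)$ is the number of subgraphs of $G$ isomorphic to the cycle on $k$ vertices. *)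

theory Defs
  imports Complex_Main
begin

text \<open>Vertices v_1..v_n are encoded as 0..n-1 (v_j as j-1), so the pair
  {v_(2i-1), v_(2i)} (1 <= i <= n/2) is {2(i-1), 2(i-1)+1}.  A vector
  x in {0,1}^(n/2) is encoded as x :: nat => bool with x_i = 1 iff x (i-1),
  only the indices i < n div 2 being relevant.\<close>

definition GX_edge :: "nat \<Rightarrow> (nat \<Rightarrow> bool) \<Rightarrow> nat \<Rightarrow> nat \<Rightarrow> bool" where
  "GX_edge n x u v \<longleftrightarrow> u < n \<and> v < n \<and> u \<noteq> v \<and>
     (u div 2 = v div 2 \<longrightarrow> x (u div 2))"

definition weight :: "nat \<Rightarrow> (nat \<Rightarrow> bool) \<Rightarrow> nat" where
  "weight n x = card {i. i < n div 2 \<and> x i}"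

definition cycle_edges :: "nat list \<Rightarrow> nat set set" where
  "cycle_edges vs = {{vs ! j, vs ! ((j + 1) mod length vs)} | j. j < length vs}"

text \<open>Such a subgraph has no isolated vertices, so it is determined by its
  edge set, which is the edge set of a cyclic sequence of k distinct vertices
  all of whose consecutive pairs are edges of G.\<close>
definition cycle_count :: "(nat \<Rightarrow> nat \<Rightarrow> bool) \<Rightarrow> nat \<Rightarrow> nat" where
  "cycle_count E k = card {cycle_edges vs | vs.
      length vs = k \<and> distinct vs \<and>
      (\<forall>j < k. E (vs ! j) (vs ! ((j + 1) mod k)))}"

end

theory Submission
  imports Defs
begin

(* Relabelling the pairs {2i, 2i+1} by a permutation is a graph isomorphism, so G^x depends
   up to isomorphism only on |x| and we may assume x' <= x coordinatewise.  Switching on a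
   pair p adds the edge {2p, 2p+1} and with it every k-cycle 2p, 2p+1, w_1, ..., w_(k-2)
   whose w_i are distinct even vertices outside pair p: these lie in pairwise different
   pairs, so all other edges of the cycle are present in any G^x.  There are at least
   (n/2 - k + 1)^(k-2) >= (n/4)^(k-2) such cycles when n >= 4k, and summing over the
   D switched pairs gives the bound with c = 4^-(k-2). *)

lemma Suc_mod_less: "j < n \<Longrightarrow> Suc j mod n < n"
  by simp

definition cycle_subgraphs :: "(nat \<Rightarrow> nat \<Rightarrow> bool) \<Rightarrow> nat \<Rightarrow> nat set set set" where
  "cycle_subgraphs E k = {cycle_edges vs | vs. length vs = k \<and> distinct vs \<and>
      (\<forall>j < k. E (vs ! j) (vs ! ((j + 1) mod k)))}"

lemma cycle_count_eq_card: "cycle_count E k = card (cycle_subgraphs E k)"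
  unfolding cycle_count_def cycle_subgraphs_def ..

lemma cycle_subgraphs_mono:
  assumes "\<And>u v. E u v \<Longrightarrow> E' u v"
  shows "cycle_subgraphs E k \<subseteq> cycle_subgraphs E' k"
  unfolding cycle_subgraphs_def using assms by blast

lemma set_subset_if_cycle_walk:
  assumes "length vs = k" "\<forall>j < k. E (vs ! j) (vs ! ((j + 1) mod k))"
    and "\<And>u v. E u v \<Longrightarrow> u \<in> V"
  shows "set vs \<subseteq> V"
  unfolding subset_iff in_set_conv_nth using assms by blast

lemma cycle_edges_eq_image:
  "cycle_edges vs = (\<lambda>j. {vs ! j, vs ! ((j + 1) mod length vs)}) ` {..<length vs}"
  unfolding cycle_edges_def by auto

lemma cycle_edges_subset_Pow: "set vs \<subseteq> V \<Longrightarrow> cycle_edges vs \<subseteq> Pow V"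
  unfolding cycle_edges_eq_image by (auto simp: Suc_mod_less)

lemma cycle_subgraphs_subset_Pow:
  assumes "\<And>u v. E u v \<Longrightarrow> u \<in> V"
  shows "cycle_subgraphs E k \<subseteq> Pow (Pow V)"
proof
  fix C assume "C \<in> cycle_subgraphs E k"
  then obtain vs where C: "C = cycle_edges vs" and vs: "length vs = k"
    and walk: "\<forall>j < k. E (vs ! j) (vs ! ((j + 1) mod k))"
    unfolding cycle_subgraphs_def by blast
  have "set vs \<subseteq> V" using vs walk assms by (rule set_subset_if_cycle_walk)
  then show "C \<in> Pow (Pow V)" unfolding C by (simp add: cycle_edges_subset_Pow)
qed

lemma finite_cycle_subgraphs:
  assumes "finite V" "\<And>u v. E u v \<Longrightarrow> u \<in> V"
  shows "finite (cycle_subgraphs E k)"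
  using finite_subset[OF cycle_subgraphs_subset_Pow] assms by blast

lemma cycle_count_mono:
  assumes "\<And>u v. E u v \<Longrightarrow> E' u v" "finite V" "\<And>u v. E' u v \<Longrightarrow> u \<in> V"
  shows "cycle_count E k \<le> cycle_count E' k"
  unfolding cycle_count_eq_card
  using card_mono[OF finite_cycle_subgraphs cycle_subgraphs_mono] assms by blast

lemma cycle_edges_map: "cycle_edges (map \<sigma> vs) = image \<sigma> ` cycle_edges vs"
  unfolding cycle_edges_eq_image image_image by (auto simp: Suc_mod_less intro!: image_cong)

lemma cycle_count_le_if_embedding:
  assumes inj: "inj_on \<sigma> V" and emb: "\<And>u v. E u v \<Longrightarrow> u \<in> V \<and> E' (\<sigma> u) (\<sigma> v)"
    and "finite V'" "\<And>u v. E' u v \<Longrightarrow> u \<in> V'"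
  shows "cycle_count E k \<le> cycle_count E' k"
proof -
  let ?\<Phi> = "image (image \<sigma>)"
  have "?\<Phi> ` cycle_subgraphs E k \<subseteq> cycle_subgraphs E' k"
  proof
    fix C assume "C \<in> ?\<Phi> ` cycle_subgraphs E k"
    then obtain vs where C: "C = ?\<Phi> (cycle_edges vs)" and vs: "length vs = k" "distinct vs"
      and walk: "\<forall>j < k. E (vs ! j) (vs ! ((j + 1) mod k))"
      unfolding cycle_subgraphs_def by blast
    have "set vs \<subseteq> V" by (rule set_subset_if_cycle_walk[OF vs(1) walk]) (use emb in blast)
    then have "distinct (map \<sigma> vs)" using vs(2) inj_on_subset[OF inj] by (simp add: distinct_map)
    moreover have "\<forall>j < k. E' (map \<sigma> vs ! j) (map \<sigma> vs ! ((j + 1) mod k))"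
      using walk emb vs(1) by (simp add: Suc_mod_less)
    moreover have "length (map \<sigma> vs) = k" using vs(1) by simp
    ultimately show "C \<in> cycle_subgraphs E' k"
      unfolding cycle_subgraphs_def C cycle_edges_map[symmetric] by blast
  qed
  moreover have "inj_on ?\<Phi> (cycle_subgraphs E k)"
  proof (rule inj_on_subset)
    show "inj_on ?\<Phi> (Pow (Pow V))" using inj by (intro inj_on_image_Pow)
    show "cycle_subgraphs E k \<subseteq> Pow (Pow V)" using emb by (intro cycle_subgraphs_subset_Pow) blast
  qed
  moreover have "finite (cycle_subgraphs E' k)" using assms(3,4) by (rule finite_cycle_subgraphs)
  ultimately show ?thesis
    unfolding cycle_count_eq_card by (metis card_image card_mono)
qed

lemma cycle_edges_neighbour:
  assumes "distinct ws" "0 < j" "Suc j < length ws" "{ws ! j, b} \<in> cycle_edges ws"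
  shows "b = ws ! Suc j \<or> b = ws ! (j - 1)"
proof -
  obtain i where i: "i < length ws" and e: "{ws ! j, b} = {ws ! i, ws ! (Suc i mod length ws)}"
    using assms(4) unfolding cycle_edges_def by auto
  have i': "Suc i mod length ws < length ws" using i by (rule Suc_mod_less)
  have j: "j < length ws" using assms(3) by simp
  consider "ws ! j = ws ! i" "b = ws ! (Suc i mod length ws)"
    | "ws ! j = ws ! (Suc i mod length ws)" "b = ws ! i"
    using e by (auto simp: doubleton_eq_iff)
  then show ?thesis
  proof cases
    case 1
    then have "i = j" using assms(1) i j nth_eq_iff_index_eq by metis
    then show ?thesis using 1 assms(3) by simp
  next
    case 2
    then have "Suc i mod length ws = j" using assms(1) i' j nth_eq_iff_index_eq by metis
    then have "i = j - 1" using assms(2) i by (cases "Suc i = length ws") auto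
    then show ?thesis using 2 by simp
  qed
qed

lemma cycle_edges_eq_imp_eq:
  assumes "distinct vs" "distinct ws" "length vs = length ws"
    and "vs ! 0 = ws ! 0" "vs ! 1 = ws ! 1" "cycle_edges vs = cycle_edges ws"
  shows "vs = ws"
proof (rule nth_equalityI)
  show "length vs = length ws" by fact
  show "vs ! j = ws ! j" if "j < length vs" for j
    using that
  proof (induction j rule: less_induct)
    case (less j)
    consider "j = 0" | "j = 1" | i where "j = Suc (Suc i)"
      by (metis One_nat_def not0_implies_Suc)
    then show ?case
    proof cases
      case 3
      have "{vs ! Suc i, vs ! j} \<in> cycle_edges vs"
        unfolding cycle_edges_def using 3 less.prems by (intro CollectI exI[of _ "Suc i"]) auto
      then have "{ws ! Suc i, vs ! j} \<in> cycle_edges ws"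
        using less.IH[of "Suc i"] 3 less.prems assms(6) by simp
      then have "vs ! j = ws ! j \<or> vs ! j = ws ! i"
        using cycle_edges_neighbour[OF assms(2), of "Suc i" "vs ! j"] 3 less.prems assms(3)
        by simp
      moreover have "vs ! j \<noteq> vs ! i"
        using assms(1) 3 less.prems nth_eq_iff_index_eq by fastforce
      moreover have "vs ! i = ws ! i" using less.IH[of i] 3 less.prems by simp
      ultimately show ?thesis by auto
    qed (use assms(4,5) in simp_all)
  qed
qed

lemma GX_edge_less: "GX_edge n x u v \<Longrightarrow> u < n"
  unfolding GX_edge_def by simp

lemma GX_edge_mono:
  assumes "\<forall>i<n div 2. y i \<longrightarrow> x i" "GX_edge n y u v"
  shows "GX_edge n x u v"
proof -
  have "v div 2 < n div 2" if "u < n" "v < n" "u \<noteq> v" "u div 2 = v div 2"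
    using that by presburger
  then show ?thesis using assms unfolding GX_edge_def by metis
qed

lemma cycle_count_GX_mono:
  assumes "\<forall>i<n div 2. y i \<longrightarrow> x i"
  shows "cycle_count (GX_edge n y) k \<le> cycle_count (GX_edge n x) k"
  by (rule cycle_count_mono[of _ _ "{..<n}"]) (use GX_edge_mono[OF assms] GX_edge_less in auto)

lemma GX_edge_cycle_walkI:
  assumes "set vs \<subseteq> {..<n}" "distinct vs" "2 \<le> length vs"
    and "\<And>a b. a \<in> set vs \<Longrightarrow> b \<in> set vs \<Longrightarrow> a \<noteq> b \<Longrightarrow> a div 2 = b div 2 \<Longrightarrow> x (a div 2)"
  shows "\<forall>j < length vs. GX_edge n x (vs ! j) (vs ! ((j + 1) mod length vs))"
proof (intro allI impI)
  fix j assume j: "j < length vs"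
  have j': "(j + 1) mod length vs < length vs" using j by (simp add: Suc_mod_less)
  have "j \<noteq> (j + 1) mod length vs"
    using j assms(3) by (cases "j + 1 = length vs") auto
  then have "vs ! j \<noteq> vs ! ((j + 1) mod length vs)"
    using assms(2) j j' nth_eq_iff_index_eq by metis
  then show "GX_edge n x (vs ! j) (vs ! ((j + 1) mod length vs))"
    unfolding GX_edge_def using assms(1,4) j j' nth_mem by blast
qed

definition cycles_through_pair :: "nat \<Rightarrow> nat \<Rightarrow> nat \<Rightarrow> nat set set set" where
  "cycles_through_pair n p k = (\<lambda>ws. cycle_edges (2 * p # Suc (2 * p) # ws)) `
     {ws. length ws = k - 2 \<and> distinct ws \<and> set ws \<subseteq> (\<lambda>i. 2 * i) ` ({..<n div 2} - {p})}"

lemma distinct_pair_prefix: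
  assumes "distinct ws" "set ws \<subseteq> (\<lambda>i. 2 * i) ` ({..<m} - {p})"
  shows "distinct (2 * p # Suc (2 * p) # ws)"
  using assms by auto

lemma cycles_through_pair_subset:
  assumes "p < n div 2" "x p" "2 \<le> k"
  shows "cycles_through_pair n p k \<subseteq> cycle_subgraphs (GX_edge n x) k"
proof
  fix C assume "C \<in> cycles_through_pair n p k"
  then obtain ws where C: "C = cycle_edges (2 * p # Suc (2 * p) # ws)" and ws: "length ws = k - 2"
    "distinct ws" "set ws \<subseteq> (\<lambda>i. 2 * i) ` ({..<n div 2} - {p})"
    unfolding cycles_through_pair_def by blast
  let ?vs = "2 * p # Suc (2 * p) # ws"
  have len: "length ?vs = k" using ws(1) assms(3) by simp
  have ws_even: "even a \<and> a div 2 \<noteq> p" if "a \<in> set ws" for a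
    using that ws(3) by auto
  have dist: "distinct ?vs" using ws(2,3) by (rule distinct_pair_prefix)
  have "\<forall>j < length ?vs. GX_edge n x (?vs ! j) (?vs ! ((j + 1) mod length ?vs))"
  proof (rule GX_edge_cycle_walkI[OF _ dist])
    show "set ?vs \<subseteq> {..<n}" using ws(3) assms(1) by auto
    show "2 \<le> length ?vs" by simp
    show "x (a div 2)" if "a \<in> set ?vs" "b \<in> set ?vs" "a \<noteq> b" "a div 2 = b div 2" for a b
    proof -
      have "a \<notin> set ws \<or> b \<notin> set ws"
        using that(3,4) ws_even by (metis even_two_times_div_two)
      then have "a div 2 = p" using that ws_even by auto
      then show ?thesis using assms(2) by simp
    qed
  qed
  then show "C \<in> cycle_subgraphs (GX_edge n x) k"
    unfolding cycle_subgraphs_def C using len dist by auto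
qed

lemma cycles_through_pair_disjoint:
  assumes "\<not> y p" "2 \<le> k"
  shows "cycles_through_pair n p k \<inter> cycle_subgraphs (GX_edge n y) k = {}"
proof -
  have "{2 * p, Suc (2 * p)} \<notin> C" if C: "C \<in> cycle_subgraphs (GX_edge n y) k" for C
  proof
    assume "{2 * p, Suc (2 * p)} \<in> C"
    moreover obtain vs where "C = cycle_edges vs" "length vs = k"
      "\<forall>j < k. GX_edge n y (vs ! j) (vs ! ((j + 1) mod k))"
      using C unfolding cycle_subgraphs_def by blast
    ultimately obtain a b where "{2 * p, Suc (2 * p)} = {a, b}" "GX_edge n y a b"
      unfolding cycle_edges_def by auto
    then show False using assms(1) unfolding GX_edge_def by (auto simp: doubleton_eq_iff)
  qed
  moreover have "{2 * p, Suc (2 * p)} \<in> C" if "C \<in> cycles_through_pair n p k" for C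
    using that unfolding cycles_through_pair_def cycle_edges_def
    by (auto intro!: exI[of _ 0])
  ultimately show ?thesis by blast
qed

lemma power_le_card_distinct_lists:
  assumes "finite A"
  shows "(card A - L) ^ L \<le> card {xs. length xs = L \<and> distinct xs \<and> set xs \<subseteq> A}"
proof (cases "L \<le> card A")
  case True
  have "(card A - L) ^ L = (\<Prod>i\<in>{card A - L + 1..card A}. card A - L)"
    using True by simp
  also have "\<dots> \<le> \<Prod>{card A - L + 1..card A}"
    by (rule prod_mono) auto
  also have "\<dots> = card {xs. length xs = L \<and> distinct xs \<and> set xs \<subseteq> A}"
    using card_lists_distinct_length_eq[OF assms True] by simp
  finally show ?thesis .
qed (simp add: power_0_left)

lemma card_cycles_through_pair:
  assumes "2 \<le> k"
  shows "(n div 2 - (k - 1)) ^ (k - 2) \<le> card (cycles_through_pair n p k)"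
proof -
  define A where "A = (\<lambda>i. 2 * i) ` ({..<n div 2} - {p})"
  define W where "W = {ws. length ws = k - 2 \<and> distinct ws \<and> set ws \<subseteq> A}"
  have "inj_on (\<lambda>ws. cycle_edges (2 * p # Suc (2 * p) # ws)) W"
  proof (rule inj_onI)
    fix ws ws' assume "ws \<in> W" "ws' \<in> W"
      and "cycle_edges (2 * p # Suc (2 * p) # ws) = cycle_edges (2 * p # Suc (2 * p) # ws')"
    then have "2 * p # Suc (2 * p) # ws = 2 * p # Suc (2 * p) # ws'"
      using distinct_pair_prefix unfolding W_def A_def by (intro cycle_edges_eq_imp_eq) auto
    then show "ws = ws'" by simp
  qed
  then have card_W: "card (cycles_through_pair n p k) = card W"
    unfolding cycles_through_pair_def W_def A_def by (simp add: card_image)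
  have "card ({..<n div 2} - {p}) \<ge> n div 2 - 1"
    using diff_card_le_card_Diff[of "{p}" "{..<n div 2}"] by simp
  then have "n div 2 - 1 \<le> card A"
    unfolding A_def by (simp add: card_image inj_on_def)
  then have "n div 2 - (k - 1) \<le> card A - (k - 2)" using assms by linarith
  then have "(n div 2 - (k - 1)) ^ (k - 2) \<le> (card A - (k - 2)) ^ (k - 2)"
    by (rule power_mono) simp
  also have "\<dots> \<le> card W"
    unfolding W_def A_def by (rule power_le_card_distinct_lists) simp
  finally show ?thesis unfolding card_W .
qed

lemma cycle_count_GX_switch_on:
  assumes "\<forall>i<n div 2. y i \<longrightarrow> x i" "p < n div 2" "x p" "\<not> y p" "2 \<le> k"
  shows "cycle_count (GX_edge n y) k + (n div 2 - (k - 1)) ^ (k - 2) \<le> cycle_count (GX_edge n x) k"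
proof -
  let ?S = "\<lambda>z. cycle_subgraphs (GX_edge n z) k"
  let ?P = "cycles_through_pair n p k"
  have fin: "finite (?S z)" for z
    by (rule finite_cycle_subgraphs[of "{..<n}"]) (auto dest: GX_edge_less)
  have P_sub: "?P \<subseteq> ?S x" using assms(2,3,5) by (rule cycles_through_pair_subset)
  have "card (?S y) + card ?P = card (?S y \<union> ?P)"
    using cycles_through_pair_disjoint[of y p k n, OF assms(4,5)] fin finite_subset[OF P_sub fin]
    by (simp add: card_Un_disjoint inf_commute)
  also have "\<dots> \<le> card (?S x)"
    using cycle_subgraphs_mono[OF GX_edge_mono[OF assms(1)]] P_sub fin
    by (intro card_mono) auto
  finally show ?thesis
    using card_cycles_through_pair[OF assms(5), of n p] unfolding cycle_count_eq_card by linarith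
qed

lemma cycle_count_GX_gain:
  assumes "\<forall>i<n div 2. y i \<longrightarrow> x i" "card {i. i < n div 2 \<and> x i \<and> \<not> y i} = d" "2 \<le> k"
  shows "cycle_count (GX_edge n y) k + d * (n div 2 - (k - 1)) ^ (k - 2)
    \<le> cycle_count (GX_edge n x) k"
  using assms(1,2)
proof (induction d arbitrary: y)
  case 0
  then show ?case using cycle_count_GX_mono by simp
next
  case (Suc d)
  then obtain p where p: "p < n div 2" "x p" "\<not> y p"
    by (metis (mono_tags, lifting) card.empty empty_Collect_eq nat.distinct(1))
  define y' where "y' = y(p := True)"
  have "\<forall>i<n div 2. y' i \<longrightarrow> x i" using Suc.prems(1) p unfolding y'_def by simp
  moreover have "{i. i < n div 2 \<and> x i \<and> \<not> y' i} = {i. i < n div 2 \<and> x i \<and> \<not> y i} - {p}"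
    unfolding y'_def by auto
  then have "card {i. i < n div 2 \<and> x i \<and> \<not> y' i} = d" using Suc.prems(2) p by simp
  ultimately have "cycle_count (GX_edge n y') k + d * (n div 2 - (k - 1)) ^ (k - 2)
      \<le> cycle_count (GX_edge n x) k"
    by (rule Suc.IH)
  moreover have "cycle_count (GX_edge n y) k + (n div 2 - (k - 1)) ^ (k - 2)
      \<le> cycle_count (GX_edge n y') k"
    using cycle_count_GX_switch_on[of n y y' p k] p assms(3) unfolding y'_def by simp
  ultimately show ?case by simp
qed

lemma weight_eq_add_card_diff:
  assumes "\<forall>i<n div 2. y i \<longrightarrow> x i"
  shows "weight n x = weight n y + card {i. i < n div 2 \<and> x i \<and> \<not> y i}"
proof -
  have "{i. i < n div 2 \<and> x i} = {i. i < n div 2 \<and> y i} \<union> {i. i < n div 2 \<and> x i \<and> \<not> y i}"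
    using assms by auto
  then show ?thesis
    unfolding weight_def by (simp add: card_Un_disjoint disjoint_iff)
qed

lemma obtain_bij_betw_image_subset:
  assumes "finite S" "A \<subseteq> S" "B \<subseteq> S" "card A \<le> card B"
  obtains \<tau> where "bij_betw \<tau> S S" "\<tau> ` A \<subseteq> B"
proof -
  obtain B' where B': "B' \<subseteq> B" "card B' = card A" "finite B'"
    using obtain_subset_with_card_n[OF assms(4)] .
  have fin: "finite A" "finite B'" using finite_subset[OF assms(2,1)] B'(3) by auto
  obtain f where f: "bij_betw f A B'"
    using finite_same_card_bij[OF fin] B'(2) by auto
  have "card (S - A) = card (S - B')"
    using assms(1-3) B' fin by (simp add: card_Diff_subset)
  then obtain g where g: "bij_betw g (S - A) (S - B')"
    using finite_same_card_bij[of "S - A" "S - B'"] assms(1) by auto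
  define \<tau> where "\<tau> i = (if i \<in> A then f i else g i)" for i
  have "bij_betw \<tau> (A \<union> (S - A)) (B' \<union> (S - B'))"
    unfolding \<tau>_def using f g by (intro bij_betw_disjoint_Un) auto
  moreover have "A \<union> (S - A) = S" "B' \<union> (S - B') = S" using assms(2,3) B'(1) by auto
  ultimately have "bij_betw \<tau> S S" by simp
  moreover have "\<tau> ` A \<subseteq> B"
    using f B'(1) unfolding \<tau>_def bij_betw_def by auto
  ultimately show ?thesis by (rule that)
qed

lemma cycle_count_GX_relabel:
  assumes "even n" and \<tau>: "bij_betw \<tau> {..<n div 2} {..<n div 2}"
  shows "cycle_count (GX_edge n x) k
    \<le> cycle_count (GX_edge n (\<lambda>j. j \<in> \<tau> ` {i. i < n div 2 \<and> x i})) k"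
proof -
  define y where "y j \<longleftrightarrow> j \<in> \<tau> ` {i. i < n div 2 \<and> x i}" for j
  define \<sigma> where "\<sigma> a = 2 * \<tau> (a div 2) + a mod 2" for a
  have n: "a < n \<longleftrightarrow> a div 2 < n div 2" for a using assms(1) by auto
  have \<sigma>_div: "\<sigma> a div 2 = \<tau> (a div 2)" and \<sigma>_mod: "\<sigma> a mod 2 = a mod 2" for a
    unfolding \<sigma>_def by simp_all
  have \<tau>_inj: "\<tau> a = \<tau> b \<longleftrightarrow> a = b" if "a < n div 2" "b < n div 2" for a b
    using \<tau> that by (auto simp: bij_betw_def inj_on_def)
  have \<sigma>_less: "\<sigma> a < n" if "a < n" for a
    using \<tau> that n[of a] n[of "\<sigma> a"] \<sigma>_div by (auto simp: bij_betw_def)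
  have \<sigma>_inj: "inj_on \<sigma> {..<n}"
  proof (rule inj_onI)
    fix a b assume "a \<in> {..<n}" "b \<in> {..<n}" "\<sigma> a = \<sigma> b"
    then have "a div 2 = b div 2" "a mod 2 = b mod 2"
      using \<sigma>_div \<sigma>_mod \<tau>_inj n by (metis lessThan_iff)+
    then show "a = b" by (metis div_mult_mod_eq)
  qed
  have "GX_edge n y (\<sigma> u) (\<sigma> v)" if "GX_edge n x u v" for u v
  proof -
    have uv: "u < n" "v < n" "u \<noteq> v" "u div 2 = v div 2 \<longrightarrow> x (u div 2)"
      using that unfolding GX_edge_def by auto
    have "\<sigma> u \<noteq> \<sigma> v" using \<sigma>_inj uv(1-3) by (auto dest: inj_onD)
    moreover have "y (\<sigma> u div 2)" if "\<sigma> u div 2 = \<sigma> v div 2"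
    proof -
      have "u div 2 = v div 2" using that \<sigma>_div \<tau>_inj n uv(1,2) by metis
      then show ?thesis unfolding y_def \<sigma>_div using uv(1,4) n by auto
    qed
    ultimately show ?thesis unfolding GX_edge_def using \<sigma>_less uv(1,2) by auto
  qed
  then show ?thesis unfolding y_def[symmetric]
    by (intro cycle_count_le_if_embedding[OF \<sigma>_inj, of _ _ "{..<n}"]) (auto dest: GX_edge_less)
qed

lemma obtain_GX_below_same_weight:
  assumes "even n" "weight n x' \<le> weight n x"
  obtains y where "\<forall>i<n div 2. y i \<longrightarrow> x i" "weight n y = weight n x'"
    "cycle_count (GX_edge n x') k \<le> cycle_count (GX_edge n y) k"
proof -
  define A' where "A' = {i. i < n div 2 \<and> x' i}"
  obtain \<tau> where \<tau>: "bij_betw \<tau> {..<n div 2} {..<n div 2}" "\<tau> ` A' \<subseteq> {i. i < n div 2 \<and> x i}"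
    using obtain_bij_betw_image_subset[of "{..<n div 2}" A' "{i. i < n div 2 \<and> x i}"] assms(2)
    unfolding A'_def weight_def by auto
  define y where "y j \<longleftrightarrow> j \<in> \<tau> ` A'" for j
  have "\<forall>i<n div 2. y i \<longrightarrow> x i" using \<tau>(2) unfolding y_def by auto
  moreover have "weight n y = weight n x'"
  proof -
    have "{j. j < n div 2 \<and> y j} = \<tau> ` A'" using \<tau>(2) unfolding y_def by auto
    moreover have "inj_on \<tau> A'"
      using bij_betw_imp_inj_on[OF \<tau>(1)] unfolding A'_def by (rule inj_on_subset) auto
    ultimately show ?thesis unfolding weight_def by (simp add: card_image A'_def)
  qed
  moreover have "cycle_count (GX_edge n x') k \<le> cycle_count (GX_edge n y) k"
    using cycle_count_GX_relabel[OF assms(1) \<tau>(1)] unfolding y_def A'_def .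
  ultimately show ?thesis by (rule that)
qed

theorem lemma4:
  fixes k :: nat
  assumes "k \<ge> 3"
  shows "\<exists>c::real. c > 0 \<and> (\<exists>n0::nat. \<forall>n x x'. n \<ge> n0 \<longrightarrow> even n \<longrightarrow>
           weight n x \<ge> weight n x' \<longrightarrow>
           real (cycle_count (GX_edge n x) k) - real (cycle_count (GX_edge n x') k)
             \<ge> c * real n ^ (k - 2) * (real (weight n x) - real (weight n x')))"
proof (intro exI conjI allI impI)
  show "(1 / 4 :: real) ^ (k - 2) > 0" by simp
  fix n x x' assume n: "4 * k \<le> n" and ev: "even n" and w: "weight n x' \<le> weight n x"
  obtain y where yx: "\<forall>i<n div 2. y i \<longrightarrow> x i" and wy: "weight n y = weight n x'"
    and cy: "cycle_count (GX_edge n x') k \<le> cycle_count (GX_edge n y) k"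
    using obtain_GX_below_same_weight[OF ev w] .
  let ?D = "weight n x - weight n x'"
  have "cycle_count (GX_edge n y) k + ?D * (n div 2 - (k - 1)) ^ (k - 2) \<le> cycle_count (GX_edge n x) k"
    using cycle_count_GX_gain[OF yx] weight_eq_add_card_diff[OF yx] wy assms by simp
  then have gain: "real ?D * real (n div 2 - (k - 1)) ^ (k - 2)
      \<le> real (cycle_count (GX_edge n x) k) - real (cycle_count (GX_edge n x') k)"
    using cy by (simp flip: of_nat_mult of_nat_power)
  have "real n / 4 \<le> real (n div 2 - (k - 1))" using n ev by (auto elim!: evenE)
  then have "(1 / 4) ^ (k - 2) * real n ^ (k - 2) \<le> real (n div 2 - (k - 1)) ^ (k - 2)"
    by (simp add: power_mono flip: power_mult_distrib)
  then have "(1 / 4) ^ (k - 2) * real n ^ (k - 2) * real ?D \<le> real ?D * real (n div 2 - (k - 1)) ^ (k - 2)"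
    by (simp add: mult.commute mult_left_mono)
  then show "(1 / 4) ^ (k - 2) * real n ^ (k - 2) * (real (weight n x) - real (weight n x'))
      \<le> real (cycle_count (GX_edge n x) k) - real (cycle_count (GX_edge n x') k)"
    using gain w by (simp add: of_nat_diff)
qed

end
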